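(* Let $G=(V,E)$ be a connected graph, $\tau$ a set of types, $f:\tau\to\mathbb{Q}_{\ge1}$ a fitness function, and $\alpha\in\tau$. Let $\beta=\arg\max\{f(j): j\in\tau\setminus\{\alpha\}\}$ and $\tau'=\{\alpha,\beta\}$. Let $\Omega$ (resp. $\Omega'$) be the set of functions $V\to\tau$ (resp. $V\to\tau'$), and define $g:\Omega\to\Omega'$ by $g(S)(v)=\alpha$ if $S(v)=\alpha$ and $g(S)(v)=\beta$ otherwise. Then for every $M_0\in\Omega$, $\pi_\alpha(G,\tau,f,M_0)\ge\pi_\alpha(G,\tau',f,g(M_0))$ (where on the right $f$ is restricted to $\tau'$).
   Context: For $G=(V,E)$, $N(v)$ is the neighbourhood of $v$. For a state $S:V\to\tau$ and $v,w\in V$, $S|_{v\to w}$ equals $S$ except $w$ gets type $S(v)$. The Moran process $M(G,\tau,f,M_0)$ is the Markov chain on states $V\to\tau$ started at $M_0$ in which, given $M_t$, a vertex $v$ is chosen with probability $f(M_t(v))/\sum_{u\in V}f(M_t(u))$, then $w\in N(v)$ uniformly at random, and $M_{t+1}=M_t|_{v\to w}$. $\pi_j(G,\tau,f,M_0)$ is the probability that at some time every vertex has type $j$. *)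

theory Defs
  imports Complex_Main
begin

definition simple_graph :: "'a set \<Rightarrow> ('a \<times> 'a) set \<Rightarrow> bool" where
  "simple_graph V E \<longleftrightarrow> finite V \<and> E \<subseteq> V \<times> V \<and> sym E \<and> (\<forall>v. (v, v) \<notin> E)"

definition connected_graph :: "'a set \<Rightarrow> ('a \<times> 'a) set \<Rightarrow> bool" where
  "connected_graph V E \<longleftrightarrow> simple_graph V E \<and> V \<noteq> {} \<and> (\<forall>u\<in>V. \<forall>v\<in>V. (u, v) \<in> E\<^sup>*)"

definition nbhd :: "('a \<times> 'a) set \<Rightarrow> 'a \<Rightarrow> 'a set" where
  "nbhd E v = {w. (v, w) \<in> E}"

definition repl :: "('a \<Rightarrow> 'b) \<Rightarrow> 'a \<Rightarrow> 'a \<Rightarrow> ('a \<Rightarrow> 'b)" where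
  "repl S v w = S(w := S v)"

definition total_fitness :: "'a set \<Rightarrow> ('b \<Rightarrow> rat) \<Rightarrow> ('a \<Rightarrow> 'b) \<Rightarrow> real" where
  "total_fitness V f S = (\<Sum>u\<in>V. real_of_rat (f (S u)))"

definition moran_trans :: "'a set \<Rightarrow> ('a \<times> 'a) set \<Rightarrow> ('b \<Rightarrow> rat) \<Rightarrow>
    ('a \<Rightarrow> 'b) \<Rightarrow> ('a \<Rightarrow> 'b) \<Rightarrow> real" where
  "moran_trans V E f S S' =
     (\<Sum>v\<in>V. real_of_rat (f (S v)) / total_fitness V f S *
        (\<Sum>w\<in>nbhd E v. (if repl S v w = S' then 1 / real (card (nbhd E v)) else 0)))"

definition monochrome :: "'a set \<Rightarrow> 'b \<Rightarrow> ('a \<Rightarrow> 'b) \<Rightarrow> bool" where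
  "monochrome V j S \<longleftrightarrow> (\<forall>v\<in>V. S v = j)"

text \<open>hit_within V E f j n S: probability that the Moran process started in S has
  every vertex of type j at some time t \<le> n (first-step recursion; states
  reachable in one step from S are the S|_{v->w} with w a neighbour of v).\<close>
fun hit_within :: "'a set \<Rightarrow> ('a \<times> 'a) set \<Rightarrow> ('b \<Rightarrow> rat) \<Rightarrow> 'b \<Rightarrow> nat \<Rightarrow>
    ('a \<Rightarrow> 'b) \<Rightarrow> real" where
  "hit_within V E f j 0 S = (if monochrome V j S then 1 else 0)"
| "hit_within V E f j (Suc n) S =
     (if monochrome V j S then 1 else
        (\<Sum>v\<in>V. real_of_rat (f (S v)) / total_fitness V f S *
          (\<Sum>w\<in>nbhd E v. hit_within V E f j n (repl S v w) / real (card (nbhd E v)))))"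

text \<open>pi_j(G,tau,f,M0): probability that at some time all vertices have type j.
  The event is the increasing union over n of the events "by time n", so its
  probability is the supremum of hit_within. The type set tau only determines
  the state space (functions V -> tau), which is imposed via the hypothesis on M0.\<close>
definition fixation_prob :: "'a set \<Rightarrow> ('a \<times> 'a) set \<Rightarrow> 'b set \<Rightarrow> ('b \<Rightarrow> rat) \<Rightarrow>
    ('a \<Rightarrow> 'b) \<Rightarrow> 'b \<Rightarrow> real" where
  "fixation_prob V E \<tau> f M0 j = (SUP n. hit_within V E f j n M0)"

end

theory Submission
  imports Defs "HOL-Library.FuncSet"
begin

(* For a state T with types in {\<alpha>, \<beta>} let K(T) be the least \<alpha>-fixation probability of the
   full process over all states S : V \<rightarrow> \<tau> that have type \<alpha> wherever T has. K is superharmonic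
   for the two-type process: compare one step from T with one step from a minimiser S, edge by
   edge. Where T v = \<alpha> also S v = \<alpha> and the offspring states still dominate. Where T v = \<beta>,
   either S v = \<alpha>, and that step of S can only raise the fixation probability above K(T), or
   S v is another non-\<alpha> type, which reproduces no faster than \<beta>, and the offspring states
   dominate again. As S is harmonic for the full process, the expected value of K after one
   step from T is at most K(T). Since K = 1 at the \<alpha>-monochrome state and K \<ge> 0, induction on
   the time horizon bounds the probability of \<alpha>-fixation by time n from T by K(T), and M0
   dominates g(M0). Isolated vertices only occur in the one-vertex graph, which is frozen. *)

definition moran_expect ::
    "'a set \<Rightarrow> ('a \<times> 'a) set \<Rightarrow> ('b \<Rightarrow> rat) \<Rightarrow> (('a \<Rightarrow> 'b) \<Rightarrow> real) \<Rightarrow> ('a \<Rightarrow> 'b) \<Rightarrow> real" where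
  "moran_expect V E f h S =
     (\<Sum>v\<in>V. real_of_rat (f (S v)) / total_fitness V f S *
        (\<Sum>w\<in>nbhd E v. h (repl S v w) / real (card (nbhd E v))))"

lemma hit_within_Suc_eq:
  "hit_within V E f j (Suc n) S =
     (if monochrome V j S then 1 else moran_expect V E f (hit_within V E f j n) S)"
  by (simp add: moran_expect_def)

declare hit_within.simps(2) [simp del]

lemma nbhd_subset: "E \<subseteq> V \<times> V \<Longrightarrow> nbhd E v \<subseteq> V"
  by (auto simp: nbhd_def)

lemma total_fitness_nonneg: "\<forall>u\<in>V. 0 \<le> f (S u) \<Longrightarrow> 0 \<le> total_fitness V f S"
  unfolding total_fitness_def by (simp add: sum_nonneg)

lemma total_fitness_pos:
  "finite V \<Longrightarrow> V \<noteq> {} \<Longrightarrow> \<forall>u\<in>V. 0 < f (S u) \<Longrightarrow> 0 < total_fitness V f S"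
  unfolding total_fitness_def by (simp add: sum_pos)

lemma moran_expect_mono:
  assumes "\<forall>u\<in>V. 0 \<le> f (S u)" and "\<forall>v\<in>V. \<forall>w\<in>nbhd E v. h (repl S v w) \<le> h' (repl S v w)"
  shows "moran_expect V E f h S \<le> moran_expect V E f h' S"
proof -
  have "0 \<le> total_fitness V f S" using assms(1) by (rule total_fitness_nonneg)
  then show ?thesis using assms unfolding moran_expect_def
    by (auto intro!: sum_mono mult_left_mono divide_right_mono)
qed

lemma moran_expect_nonneg:
  assumes "\<forall>u\<in>V. 0 \<le> f (S u)" and "\<forall>v\<in>V. \<forall>w\<in>nbhd E v. 0 \<le> h (repl S v w)"
  shows "0 \<le> moran_expect V E f h S"
proof -
  have "0 \<le> total_fitness V f S" using assms(1) by (rule total_fitness_nonneg)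
  then show ?thesis using assms unfolding moran_expect_def
    by (auto intro!: sum_nonneg mult_nonneg_nonneg divide_nonneg_nonneg)
qed

lemma moran_expect_le_1:
  assumes "\<forall>u\<in>V. 0 \<le> f (S u)" and "\<forall>v\<in>V. \<forall>w\<in>nbhd E v. h (repl S v w) \<le> 1"
  shows "moran_expect V E f h S \<le> 1"
proof -
  let ?W = "total_fitness V f S"
  have average: "(\<Sum>w\<in>nbhd E v. h (repl S v w) / real (card (nbhd E v))) \<le> 1" if "v \<in> V" for v
  proof -
    have "(\<Sum>w\<in>nbhd E v. h (repl S v w) / real (card (nbhd E v)))
        \<le> (\<Sum>w\<in>nbhd E v. 1 / real (card (nbhd E v)))"
      using assms(2) that by (intro sum_mono divide_right_mono) auto
    also have "\<dots> \<le> 1" by simp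
    finally show ?thesis .
  qed
  have "0 \<le> ?W" using assms(1) by (rule total_fitness_nonneg)
  then have "moran_expect V E f h S \<le> (\<Sum>v\<in>V. real_of_rat (f (S v)) / ?W)"
    unfolding moran_expect_def using assms(1) average
    by (intro sum_mono mult_left_le) auto
  also have "\<dots> = ?W / ?W" by (simp add: total_fitness_def sum_divide_distrib[symmetric])
  also have "\<dots> \<le> 1" by simp
  finally show ?thesis .
qed

lemma moran_expect_tendsto:
  assumes "\<forall>v\<in>V. \<forall>w\<in>nbhd E v. (\<lambda>n. h n (repl S v w)) \<longlonglongrightarrow> g (repl S v w)"
  shows "(\<lambda>n. moran_expect V E f (h n) S) \<longlonglongrightarrow> moran_expect V E f g S"
  unfolding moran_expect_def divide_inverse using assms
  by (intro tendsto_sum tendsto_mult_left tendsto_mult_right) auto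

lemma moran_expect_gap:
  assumes "finite V" and "E \<subseteq> V \<times> V" and "\<forall>v\<in>V. nbhd E v \<noteq> {}"
    and "total_fitness V f S \<noteq> 0"
  shows "total_fitness V f S * (moran_expect V E f h S - c) =
    (\<Sum>v\<in>V. \<Sum>w\<in>nbhd E v. real_of_rat (f (S v)) * (h (repl S v w) - c) / real (card (nbhd E v)))"
proof -
  let ?a = "\<lambda>v. real_of_rat (f (S v))" and ?d = "\<lambda>v. real (card (nbhd E v))"
  let ?avg = "\<lambda>v. \<Sum>w\<in>nbhd E v. h (repl S v w) / ?d v"
  have per_vertex: "(\<Sum>w\<in>nbhd E v. ?a v * (h (repl S v w) - c) / ?d v) = ?a v * ?avg v - ?a v * c"
    if "v \<in> V" for v
  proof -
    have "finite (nbhd E v)" using finite_subset[OF nbhd_subset[OF assms(2)] assms(1)] .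
    then have "?d v > 0" using assms(3) that by (simp add: card_gt_0_iff)
    then show ?thesis
      by (simp add: sum_subtractf sum_distrib_left right_diff_distrib diff_divide_distrib)
  qed
  have "total_fitness V f S * moran_expect V E f h S = (\<Sum>v\<in>V. ?a v * ?avg v)"
    using assms(4) unfolding moran_expect_def by (simp add: sum_distrib_left)
  then have "total_fitness V f S * (moran_expect V E f h S - c) = (\<Sum>v\<in>V. ?a v * ?avg v - ?a v * c)"
    by (simp add: right_diff_distrib sum_subtractf total_fitness_def sum_distrib_right)
  also have "\<dots> = (\<Sum>v\<in>V. \<Sum>w\<in>nbhd E v. ?a v * (h (repl S v w) - c) / ?d v)"
    using per_vertex by simp
  finally show ?thesis .
qed

lemma hit_within_cong:
  "\<forall>u\<in>V. S u = S' u \<Longrightarrow> hit_within V E f j n S = hit_within V E f j n S'"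
proof (induction n arbitrary: S S')
  case 0
  then show ?case by (simp add: monochrome_def)
next
  case (Suc n)
  have "monochrome V j S = monochrome V j S'"
    using Suc.prems by (simp add: monochrome_def)
  moreover have "total_fitness V f S = total_fitness V f S'"
    using Suc.prems unfolding total_fitness_def by (intro sum.cong) auto
  moreover have "hit_within V E f j n (repl S v w) = hit_within V E f j n (repl S' v w)"
    if "v \<in> V" for v w
    using Suc.prems that by (intro Suc.IH) (auto simp: repl_def)
  ultimately show ?case
    using Suc.prems by (auto simp: moran_expect_def hit_within_Suc_eq intro!: sum.cong)
qed

lemma hit_within_nonneg:
  "\<forall>u\<in>V. 0 \<le> f (S u) \<Longrightarrow> 0 \<le> hit_within V E f j n S"
proof (induction n arbitrary: S)
  case (Suc n)
  then have "\<forall>v\<in>V. \<forall>w\<in>nbhd E v. 0 \<le> hit_within V E f j n (repl S v w)"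
    by (simp add: repl_def)
  with Suc.prems show ?case by (simp add: hit_within_Suc_eq moran_expect_nonneg)
qed simp

lemma hit_within_le_1:
  "\<forall>u\<in>V. 0 \<le> f (S u) \<Longrightarrow> hit_within V E f j n S \<le> 1"
proof (induction n arbitrary: S)
  case (Suc n)
  then have "\<forall>v\<in>V. \<forall>w\<in>nbhd E v. hit_within V E f j n (repl S v w) \<le> 1"
    by (simp add: repl_def)
  with Suc.prems show ?case by (simp add: hit_within_Suc_eq moran_expect_le_1)
qed simp

lemma hit_within_Suc_mono:
  "\<forall>u\<in>V. 0 \<le> f (S u) \<Longrightarrow> hit_within V E f j n S \<le> hit_within V E f j (Suc n) S"
proof (induction n arbitrary: S)
  case 0
  then show ?case
    using hit_within_nonneg[of V f S E j 1] by (auto simp: hit_within_Suc_eq split: if_splits)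
next
  case (Suc n)
  then have "\<forall>v\<in>V. \<forall>w\<in>nbhd E v.
      hit_within V E f j n (repl S v w) \<le> hit_within V E f j (Suc n) (repl S v w)"
    by (simp add: repl_def)
  with Suc.prems show ?case
    by (simp add: hit_within_Suc_eq moran_expect_mono)
qed

lemma hit_within_tendsto_fixation_prob:
  assumes "\<forall>u\<in>V. 0 \<le> f (S u)"
  shows "(\<lambda>n. hit_within V E f j n S) \<longlonglongrightarrow> fixation_prob V E \<tau> f S j"
  unfolding fixation_prob_def
proof (rule LIMSEQ_incseq_SUP)
  show "bdd_above (range (\<lambda>n. hit_within V E f j n S))"
    using hit_within_le_1[of V f S, OF assms] by (intro bdd_aboveI[where M = 1]) auto
  show "incseq (\<lambda>n. hit_within V E f j n S)"
    using hit_within_Suc_mono[of V f S, OF assms] by (intro incseq_SucI) auto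
qed

lemma fixation_prob_nonneg:
  "\<forall>u\<in>V. 0 \<le> f (S u) \<Longrightarrow> 0 \<le> fixation_prob V E \<tau> f S j"
  by (rule LIMSEQ_le_const[OF hit_within_tendsto_fixation_prob]) (auto intro: hit_within_nonneg)

lemma fixation_prob_monochrome: "monochrome V j S \<Longrightarrow> fixation_prob V E \<tau> f S j = 1"
proof -
  assume "monochrome V j S"
  then have "hit_within V E f j n S = 1" for n
    by (cases n) (simp_all add: hit_within_Suc_eq)
  then show ?thesis unfolding fixation_prob_def by simp
qed

lemma fixation_prob_cong:
  "\<forall>u\<in>V. S u = S' u \<Longrightarrow> fixation_prob V E \<tau> f S j = fixation_prob V E \<tau> f S' j"
  unfolding fixation_prob_def using hit_within_cong by metis

lemma fixation_prob_harmonic: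
  assumes "\<forall>u\<in>V. 0 \<le> f (S u)" and "\<not> monochrome V j S"
  shows "fixation_prob V E \<tau> f S j = moran_expect V E f (\<lambda>S'. fixation_prob V E \<tau> f S' j) S"
proof (rule LIMSEQ_unique)
  show "(\<lambda>n. hit_within V E f j (Suc n) S) \<longlonglongrightarrow> fixation_prob V E \<tau> f S j"
    using assms(1) by (intro LIMSEQ_Suc hit_within_tendsto_fixation_prob)
  have "\<forall>v\<in>V. \<forall>w\<in>nbhd E v. (\<lambda>n. hit_within V E f j n (repl S v w))
      \<longlonglongrightarrow> fixation_prob V E \<tau> f (repl S v w) j"
    using assms(1) by (auto intro: hit_within_tendsto_fixation_prob simp: repl_def)
  then show "(\<lambda>n. hit_within V E f j (Suc n) S)
      \<longlonglongrightarrow> moran_expect V E f (\<lambda>S'. fixation_prob V E \<tau> f S' j) S"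
    using assms(2) by (simp add: hit_within_Suc_eq moran_expect_tendsto)
qed

lemma fixation_prob_singleton:
  assumes "simple_graph V E" and "V = {x}"
  shows "fixation_prob V E \<tau> f S j = (if S x = j then 1 else 0)"
proof -
  have "nbhd E x = {}"
    using assms unfolding simple_graph_def nbhd_def by auto
  then have "hit_within V E f j n S = (if S x = j then 1 else 0)" for n
    using assms(2) by (cases n) (simp_all add: hit_within_Suc_eq moran_expect_def monochrome_def)
  then show ?thesis unfolding fixation_prob_def by simp
qed

text \<open>Extensional functions, so that the set is finite and \<open>worst_fixation\<close> is a minimum.\<close>

definition dominating_states :: "'a set \<Rightarrow> 'b set \<Rightarrow> 'b \<Rightarrow> ('a \<Rightarrow> 'b) \<Rightarrow> ('a \<Rightarrow> 'b) set" where
  "dominating_states V \<tau> \<alpha> T = {S \<in> V \<rightarrow>\<^sub>E \<tau>. \<forall>v\<in>V. T v = \<alpha> \<longrightarrow> S v = \<alpha>}"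

definition worst_fixation ::
    "'a set \<Rightarrow> ('a \<times> 'a) set \<Rightarrow> ('b \<Rightarrow> rat) \<Rightarrow> 'b set \<Rightarrow> 'b \<Rightarrow> ('a \<Rightarrow> 'b) \<Rightarrow> real" where
  "worst_fixation V E f \<tau> \<alpha> T =
     Min ((\<lambda>S. fixation_prob V E \<tau> f S \<alpha>) ` dominating_states V \<tau> \<alpha> T)"

lemma finite_dominating_states:
  "finite V \<Longrightarrow> finite \<tau> \<Longrightarrow> finite (dominating_states V \<tau> \<alpha> T)"
  unfolding dominating_states_def by (rule finite_subset[OF _ finite_PiE[of V "\<lambda>_. \<tau>"]]) auto

lemma const_in_dominating_states: "\<alpha> \<in> \<tau> \<Longrightarrow> (\<lambda>v\<in>V. \<alpha>) \<in> dominating_states V \<tau> \<alpha> T"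
  unfolding dominating_states_def by auto

lemma worst_fixation_le:
  "finite V \<Longrightarrow> finite \<tau> \<Longrightarrow> S \<in> dominating_states V \<tau> \<alpha> T \<Longrightarrow>
    worst_fixation V E f \<tau> \<alpha> T \<le> fixation_prob V E \<tau> f S \<alpha>"
  unfolding worst_fixation_def by (auto intro: Min_le finite_dominating_states)

lemma worst_fixation_attained:
  assumes "finite V" and "finite \<tau>" and "\<alpha> \<in> \<tau>"
  obtains S where "S \<in> dominating_states V \<tau> \<alpha> T"
    and "worst_fixation V E f \<tau> \<alpha> T = fixation_prob V E \<tau> f S \<alpha>"
proof -
  have "worst_fixation V E f \<tau> \<alpha> T \<in> (\<lambda>S. fixation_prob V E \<tau> f S \<alpha>) ` dominating_states V \<tau> \<alpha> T"
    unfolding worst_fixation_def using assms const_in_dominating_states[OF assms(3)]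
    by (intro Min_in finite_imageI finite_dominating_states) blast+
  then show ?thesis using that by blast
qed

lemma worst_fixation_le_1:
  "finite V \<Longrightarrow> finite \<tau> \<Longrightarrow> \<alpha> \<in> \<tau> \<Longrightarrow> worst_fixation V E f \<tau> \<alpha> T \<le> 1"
proof -
  assume "finite V" "finite \<tau>" "\<alpha> \<in> \<tau>"
  then have "worst_fixation V E f \<tau> \<alpha> T \<le> fixation_prob V E \<tau> f (\<lambda>v\<in>V. \<alpha>) \<alpha>"
    by (intro worst_fixation_le const_in_dominating_states)
  also have "\<dots> = 1" by (simp add: fixation_prob_monochrome monochrome_def)
  finally show ?thesis .
qed

lemma worst_fixation_nonneg:
  assumes "finite V" and "finite \<tau>" and "\<alpha> \<in> \<tau>" and "\<forall>x\<in>\<tau>. 0 \<le> f x"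
  shows "0 \<le> worst_fixation V E f \<tau> \<alpha> T"
proof -
  obtain S where S: "S \<in> dominating_states V \<tau> \<alpha> T"
    and "worst_fixation V E f \<tau> \<alpha> T = fixation_prob V E \<tau> f S \<alpha>"
    using worst_fixation_attained[OF assms(1-3)] .
  moreover have "\<forall>u\<in>V. 0 \<le> f (S u)"
    using S assms(4) unfolding dominating_states_def by auto
  ultimately show ?thesis by (simp add: fixation_prob_nonneg)
qed

lemma worst_fixation_monochrome:
  assumes "finite V" and "finite \<tau>" and "\<alpha> \<in> \<tau>" and "monochrome V \<alpha> T"
  shows "worst_fixation V E f \<tau> \<alpha> T = 1"
proof -
  obtain S where S: "S \<in> dominating_states V \<tau> \<alpha> T"
    and "worst_fixation V E f \<tau> \<alpha> T = fixation_prob V E \<tau> f S \<alpha>"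
    using worst_fixation_attained[OF assms(1-3)] .
  moreover have "monochrome V \<alpha> S"
    using S assms(4) unfolding dominating_states_def monochrome_def by auto
  ultimately show ?thesis by (simp add: fixation_prob_monochrome)
qed

lemma worst_fixation_gap_le:
  assumes "finite V" and "E \<subseteq> V \<times> V" and "finite \<tau>"
    and fitness_nonneg: "\<forall>x\<in>\<tau>. 0 \<le> f x"
    and "\<beta> \<in> \<tau>" and fitness_max: "\<forall>x\<in>\<tau> - {\<alpha>}. f x \<le> f \<beta>"
    and T: "\<forall>u\<in>V. T u \<in> {\<alpha>, \<beta>}"
    and S: "S \<in> dominating_states V \<tau> \<alpha> T"
    and minimal: "worst_fixation V E f \<tau> \<alpha> T = fixation_prob V E \<tau> f S \<alpha>"
    and v: "v \<in> V" and w: "w \<in> nbhd E v"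
  shows "real_of_rat (f (T v)) *
           (worst_fixation V E f \<tau> \<alpha> (repl T v w) - worst_fixation V E f \<tau> \<alpha> T)
         \<le> real_of_rat (f (S v)) *
           (fixation_prob V E \<tau> f (repl S v w) \<alpha> - worst_fixation V E f \<tau> \<alpha> T)"
proof -
  let ?K = "worst_fixation V E f \<tau> \<alpha>" and ?F = "\<lambda>S. fixation_prob V E \<tau> f S \<alpha>"
  let ?D = "dominating_states V \<tau> \<alpha>"
  define c where "c = ?K T"
  have "w \<in> V" using w nbhd_subset[OF assms(2)] by blast
  then have repl_dominates_repl: "repl S v w \<in> ?D (repl T v w)" if "T v = \<alpha> \<or> S v \<noteq> \<alpha>"
    using S v that unfolding dominating_states_def repl_def by (auto simp: PiE_iff extensional_def)
  have "S v \<in> \<tau>" using S v unfolding dominating_states_def by auto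
  then have fS: "0 \<le> real_of_rat (f (S v))" using fitness_nonneg by simp
  show ?thesis
  proof (cases "T v = \<alpha>")
    case True
    then have "S v = \<alpha>" using S v unfolding dominating_states_def by auto
    moreover have "?K (repl T v w) \<le> ?F (repl S v w)"
      using True repl_dominates_repl assms(1,3) by (intro worst_fixation_le) auto
    ultimately show ?thesis using True fS c_def by (simp add: mult_left_mono)
  next
    case False
    then have Tv: "T v = \<beta>" using T v by auto
    have "S \<in> ?D (repl T v w)" using S False unfolding dominating_states_def repl_def by auto
    then have K_le_c: "?K (repl T v w) \<le> c"
      unfolding c_def minimal by (intro worst_fixation_le assms(1,3))
    show ?thesis
    proof (cases "S v = \<alpha>")
      case True
      have "repl S v w \<in> ?D T"
        using S v \<open>w \<in> V\<close> True unfolding dominating_states_def repl_def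
        by (auto simp: PiE_iff extensional_def)
      then have "c \<le> ?F (repl S v w)" unfolding c_def by (intro worst_fixation_le assms(1,3))
      have "0 \<le> real_of_rat (f (T v))" using Tv fitness_nonneg \<open>\<beta> \<in> \<tau>\<close> by simp
      then have "real_of_rat (f (T v)) * (?K (repl T v w) - c) \<le> 0"
        using K_le_c by (simp add: mult_nonneg_nonpos)
      also have "0 \<le> real_of_rat (f (S v)) * (?F (repl S v w) - c)"
        using fS \<open>c \<le> ?F (repl S v w)\<close> by simp
      finally show ?thesis unfolding c_def .
    next
      case False
      have "f (S v) \<le> f \<beta>" using fitness_max \<open>S v \<in> \<tau>\<close> False by auto
      then have "real_of_rat (f (T v)) * (?K (repl T v w) - c)
          \<le> real_of_rat (f (S v)) * (?K (repl T v w) - c)"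
        using Tv K_le_c by (intro mult_right_mono_neg) (auto simp: of_rat_less_eq)
      also have "\<dots> \<le> real_of_rat (f (S v)) * (?F (repl S v w) - c)"
        using False repl_dominates_repl assms(1,3) fS
        by (intro mult_left_mono diff_right_mono worst_fixation_le) auto
      finally show ?thesis unfolding c_def .
    qed
  qed
qed

lemma moran_expect_worst_fixation_le:
  assumes "finite V" and "E \<subseteq> V \<times> V" and no_isolated: "\<forall>v\<in>V. nbhd E v \<noteq> {}"
    and "finite \<tau>" and fitness_pos: "\<forall>x\<in>\<tau>. 0 < f x"
    and "\<alpha> \<in> \<tau>" and "\<beta> \<in> \<tau>" and fitness_max: "\<forall>x\<in>\<tau> - {\<alpha>}. f x \<le> f \<beta>"
    and T: "\<forall>u\<in>V. T u \<in> {\<alpha>, \<beta>}"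
  shows "moran_expect V E f (worst_fixation V E f \<tau> \<alpha>) T \<le> worst_fixation V E f \<tau> \<alpha> T"
proof -
  let ?K = "worst_fixation V E f \<tau> \<alpha>" and ?F = "\<lambda>S. fixation_prob V E \<tau> f S \<alpha>"
  obtain S where S: "S \<in> dominating_states V \<tau> \<alpha> T" and minimal: "?K T = ?F S"
    using worst_fixation_attained[OF assms(1,4,6)] .
  have S_fitness: "\<forall>u\<in>V. 0 < f (S u)"
    using S fitness_pos unfolding dominating_states_def by auto
  have T_fitness: "\<forall>u\<in>V. 0 < f (T u)"
    using T fitness_pos \<open>\<alpha> \<in> \<tau>\<close> \<open>\<beta> \<in> \<tau>\<close> by auto
  show ?thesis
  proof (cases "monochrome V \<alpha> S")
    case True
    have "moran_expect V E f ?K T \<le> 1"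
      using T_fitness worst_fixation_le_1[OF assms(1,4,6)] by (intro moran_expect_le_1) auto
    also have "1 = ?K T" using minimal True by (simp add: fixation_prob_monochrome)
    finally show ?thesis .
  next
    case False
    then have "V \<noteq> {}" by (auto simp: monochrome_def)
    then have W_S: "0 < total_fitness V f S" and W_T: "0 < total_fitness V f T"
      using total_fitness_pos \<open>finite V\<close> S_fitness T_fitness by blast+
    have "total_fitness V f T * (moran_expect V E f ?K T - ?K T)
        = (\<Sum>v\<in>V. \<Sum>w\<in>nbhd E v.
             real_of_rat (f (T v)) * (?K (repl T v w) - ?K T) / real (card (nbhd E v)))"
      using W_T by (intro moran_expect_gap assms(1,2) no_isolated) simp
    also have "\<dots> \<le> (\<Sum>v\<in>V. \<Sum>w\<in>nbhd E v.
             real_of_rat (f (S v)) * (?F (repl S v w) - ?K T) / real (card (nbhd E v)))"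
      using fitness_pos \<open>\<beta> \<in> \<tau>\<close> fitness_max T S minimal assms(1,2,4)
      by (intro sum_mono divide_right_mono worst_fixation_gap_le) auto
    also have "\<dots> = total_fitness V f S * (moran_expect V E f ?F S - ?K T)"
      using W_S by (intro moran_expect_gap[symmetric] assms(1,2) no_isolated) simp
    also have "\<dots> = 0"
      using minimal fixation_prob_harmonic[of V f S, OF _ False] S_fitness
      by (simp add: less_imp_le)
    finally show ?thesis using W_T by (simp add: mult_le_0_iff)
  qed
qed

lemma hit_within_le_worst_fixation:
  assumes "finite V" and "E \<subseteq> V \<times> V" and "\<forall>v\<in>V. nbhd E v \<noteq> {}"
    and "finite \<tau>" and fitness_pos: "\<forall>x\<in>\<tau>. 0 < f x"
    and "\<alpha> \<in> \<tau>" and "\<beta> \<in> \<tau>" and "\<forall>x\<in>\<tau> - {\<alpha>}. f x \<le> f \<beta>"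
  shows "\<forall>u\<in>V. T u \<in> {\<alpha>, \<beta>} \<Longrightarrow> hit_within V E f \<alpha> n T \<le> worst_fixation V E f \<tau> \<alpha> T"
proof (induction n arbitrary: T)
  case 0
  show ?case
    using worst_fixation_monochrome[OF assms(1,4,6)] worst_fixation_nonneg[OF assms(1,4,6)]
      fitness_pos by (simp add: less_imp_le)
next
  case (Suc n)
  have T_fitness: "\<forall>u\<in>V. 0 \<le> f (T u)"
    using Suc.prems fitness_pos \<open>\<alpha> \<in> \<tau>\<close> \<open>\<beta> \<in> \<tau>\<close> by (auto simp: less_imp_le)
  have "\<forall>v\<in>V. \<forall>w\<in>nbhd E v.
      hit_within V E f \<alpha> n (repl T v w) \<le> worst_fixation V E f \<tau> \<alpha> (repl T v w)"
    using Suc by (simp add: repl_def)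
  then have "moran_expect V E f (hit_within V E f \<alpha> n) T
      \<le> moran_expect V E f (worst_fixation V E f \<tau> \<alpha>) T"
    using T_fitness by (rule moran_expect_mono[rotated])
  also have "\<dots> \<le> worst_fixation V E f \<tau> \<alpha> T"
    using Suc.prems by (rule moran_expect_worst_fixation_le[OF assms])
  finally show ?case
    using worst_fixation_monochrome[OF assms(1,4,6)] by (simp add: hit_within_Suc_eq)
qed

lemma connected_graph_no_isolated:
  assumes "connected_graph V E" and "v \<in> V" and "u \<in> V" and "u \<noteq> v"
  shows "nbhd E v \<noteq> {}"
proof -
  have "(v, u) \<in> E\<^sup>*" using assms unfolding connected_graph_def by blast
  then show ?thesis
    using \<open>u \<noteq> v\<close> by (cases rule: converse_rtranclE) (auto simp: nbhd_def)
qed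

theorem corollary7:
  fixes V :: "'a set" and E :: "('a \<times> 'a) set" and \<tau> :: "'b set"
    and f :: "'b \<Rightarrow> rat" and \<alpha> \<beta> :: 'b and M0 :: "'a \<Rightarrow> 'b"
  assumes "connected_graph V E"
    and "finite \<tau>"
    and "\<forall>j\<in>\<tau>. 1 \<le> f j"
    and "\<alpha> \<in> \<tau>" and "\<beta> \<in> \<tau>" and "\<beta> \<noteq> \<alpha>"
    and "\<forall>j\<in>\<tau> - {\<alpha>}. f j \<le> f \<beta>"
    and "\<forall>v\<in>V. M0 v \<in> \<tau>"
  shows "fixation_prob V E \<tau> f M0 \<alpha>
           \<ge> fixation_prob V E {\<alpha>, \<beta>} f (\<lambda>v. if M0 v = \<alpha> then \<alpha> else \<beta>) \<alpha>"
proof -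
  define T0 where "T0 = (\<lambda>v. if M0 v = \<alpha> then \<alpha> else \<beta>)"
  have graph: "simple_graph V E" "finite V" "E \<subseteq> V \<times> V"
    using assms(1) unfolding connected_graph_def simple_graph_def by auto
  show ?thesis
  proof (cases "\<exists>x. V = {x}")
    case True
    then obtain x where "V = {x}" ..
    show ?thesis unfolding fixation_prob_singleton[OF graph(1) \<open>V = {x}\<close>] using assms(6) by simp
  next
    case False
    then have "\<forall>v\<in>V. nbhd E v \<noteq> {}"
      using connected_graph_no_isolated[OF assms(1)] by blast
    moreover have "\<forall>x\<in>\<tau>. 0 < f x"
      using assms(3) by (auto intro: order.strict_trans2[OF zero_less_one])
    ultimately have "hit_within V E f \<alpha> n T0 \<le> worst_fixation V E f \<tau> \<alpha> T0" for n
      using graph assms(2,4,5,7) by (intro hit_within_le_worst_fixation) (auto simp: T0_def)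
    also have "worst_fixation V E f \<tau> \<alpha> T0 \<le> fixation_prob V E \<tau> f (restrict M0 V) \<alpha>"
      using graph assms(2,6,8)
      by (intro worst_fixation_le) (auto simp: dominating_states_def T0_def)
    also have "\<dots> = fixation_prob V E \<tau> f M0 \<alpha>" by (rule fixation_prob_cong) simp
    finally show ?thesis
      unfolding fixation_prob_def[of _ _ "{\<alpha>, \<beta>}"] T0_def[symmetric]
      by (rule cSUP_least[rotated]) simp
  qed
qed

end
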